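(* Let $d\ge 2$ and $N\ge 2$ be integers and let $|\psi\rangle\in(\mathbb{C}^d)^{\otimes N}$ be a normalized state. For each $\alpha\in\{1,\dots,N-1\}$ let $\mu^{[\alpha]1}\ge\mu^{[\alpha]2}\ge\cdots$ be the eigenvalues (in nonincreasing order, padded with zeros) of the reduced density operator $\rho_{[1..\alpha]}=\mathrm{Tr}_{\alpha+1,\dots,N}|\psi\rangle\langle\psi|$ of the first $\alpha$ sites, and for a positive integer $D$ set $\epsilon_\alpha(D)=\sum_{i\ge D+1}\mu^{[\alpha]i}$. Then for every positive integer $D$ there exists an open-boundary matrix product state $|\psi_D\rangle$ with bond dimension at most $D$ such that $$\big\||\psi\rangle-|\psi_D\rangle\big\|^2\le 2\sum_{\alpha=1}^{N-1}\epsilon_\alpha(D).$$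
   Context: An open-boundary matrix product state (MPS) with bond dimension at most $D$ on $N$ sites of local dimension $d$ is a vector of the form $\sum_{i_1,\dots,i_N=1}^d A^{[1]i_1}A^{[2]i_2}\cdots A^{[N]i_N}\,|i_1\rangle\otimes\cdots\otimes|i_N\rangle$, where $A^{[k]i}$ is a complex $D_k\times D_{k+1}$ matrix, $D_1=D_{N+1}=1$, and $D_k\le D$ for all $k$ (so the matrix product is a scalar). *)

theory Defs
  imports "Jordan_Normal_Form.Matrix" "Jordan_Normal_Form.Char_Poly"
    "HOL-Computational_Algebra.Polynomial" "HOL-Library.Multiset"
begin

text \<open>Basis index tuples of (C^d)^(tensor N): lists of length N with entries in {0..<d}
  (site k of the paper corresponds to list position k-1).  A vector of (C^d)^(tensor N) is
  a function from such tuples to complex numbers (values elsewhere are irrelevant).\<close>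
definition tuples :: "nat \<Rightarrow> nat \<Rightarrow> nat list set" where
  "tuples N d = {is. length is = N \<and> (\<forall>x\<in>set is. x < d)}"

definition sqnorm_diff :: "nat \<Rightarrow> nat \<Rightarrow> (nat list \<Rightarrow> complex) \<Rightarrow> (nat list \<Rightarrow> complex) \<Rightarrow> real" where
  "sqnorm_diff N d psi phi = (\<Sum>is\<in>tuples N d. (cmod (psi is - phi is))^2)"

definition normalized :: "nat \<Rightarrow> nat \<Rightarrow> (nat list \<Rightarrow> complex) \<Rightarrow> bool" where
  "normalized N d psi \<longleftrightarrow> (\<Sum>is\<in>tuples N d. (cmod (psi is))^2) = 1"

text \<open>Base-d digits (most significant first) of r, of length k: a bijection
  {..<d^k} -> tuples k d, used to index the rows/columns of the reduced density matrix.\<close>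
fun digits :: "nat \<Rightarrow> nat \<Rightarrow> nat \<Rightarrow> nat list" where
  "digits d 0 r = []"
| "digits d (Suc k) r = digits d k (r div d) @ [r mod d]"

definition reduced_density :: "nat \<Rightarrow> nat \<Rightarrow> nat \<Rightarrow> (nat list \<Rightarrow> complex) \<Rightarrow> complex mat" where
  "reduced_density N d a psi = mat (d^a) (d^a) (\<lambda>(r, r').
     \<Sum>c\<in>tuples (N - a) d. psi (digits d a r @ c) * cnj (psi (digits d a r' @ c)))"

text \<open>Eigenvalues (with algebraic multiplicity) of a square complex matrix, as roots of the
  characteristic polynomial; for the Hermitian reduced density matrix they are real, and we
  list their real parts in nonincreasing order.\<close>
definition eigenvalues_desc :: "complex mat \<Rightarrow> real list" where
  "eigenvalues_desc A = rev (sorted_list_of_multiset (image_mset Re (proots (char_poly A))))"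

text \<open>epsilon_a(D): sum of the eigenvalues mu^{[a] i}, i \<ge> D+1 (zero padding contributes 0).\<close>
definition trunc_err :: "nat \<Rightarrow> nat \<Rightarrow> (nat list \<Rightarrow> complex) \<Rightarrow> nat \<Rightarrow> nat \<Rightarrow> real" where
  "trunc_err N d psi a D = sum_list (drop D (eigenvalues_desc (reduced_density N d a psi)))"

text \<open>Coefficient of an open-boundary MPS: A k i is the matrix A^{[k+1] i};
  the product A^{[1] i_1} ... A^{[N] i_N} is a 1x1 matrix.\<close>
definition mps_coeff :: "nat \<Rightarrow> (nat \<Rightarrow> nat \<Rightarrow> complex mat) \<Rightarrow> nat list \<Rightarrow> complex" where
  "mps_coeff N A is = (foldl (\<lambda>M k. M * A k (is ! k)) (1\<^sub>m 1) [0..<N]) $$ (0, 0)"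

definition is_mps :: "nat \<Rightarrow> nat \<Rightarrow> nat \<Rightarrow> (nat list \<Rightarrow> complex) \<Rightarrow> bool" where
  "is_mps N d D phi \<longleftrightarrow> (\<exists>Dims A.
     Dims 0 = 1 \<and> Dims N = 1 \<and> (\<forall>k\<le>N. Dims k \<le> D) \<and>
     (\<forall>k<N. \<forall>i<d. A k i \<in> carrier_mat (Dims k) (Dims (Suc k))) \<and>
     (\<forall>is\<in>tuples N d. phi is = mps_coeff N A is))"

end

theory Submission
  imports Defs "Jordan_Normal_Form.Schur_Decomposition"
begin

(* For every cut a (1 <= a < N) let P_a be the orthogonal projection, acting on the first a
   sites, onto the span of the eigenvectors of the reduced density matrix rho_[1..a] that belong
   to its k_a = min D (d^a) largest eigenvalues.  Then
   (1) ||psi - P_a psi||^2 = epsilon_a(D), the discarded eigenvalue weight;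
   (2) for phi = P_1 (P_2 (... (P_(N-1) psi))), Pythagoras and the contractivity of projections
       give ||psi - phi||^2 <= sum_a ||psi - P_a psi||^2 (the P_a need not commute);
   (3) phi is an MPS whose bond dimensions are the k_a: its tensors are the overlaps
       A^[a+1]i_(s,t) = <u_a,s | u_(a+1),t (. (x) i)> of consecutive eigenvector families
       (with the trivial family at a = 0 and u_N = psi itself).
   Hence ||psi - phi||^2 <= sum_a epsilon_a(D), which is sharper than the claim by a factor 2. *)


section \<open>Unitary diagonalisation of Hermitian matrices\<close>

definition ctrans :: "complex mat \<Rightarrow> complex mat" where
  "ctrans M = mat (dim_col M) (dim_row M) (\<lambda>(i,j). cnj (M $$ (j,i)))"

lemma ctrans_dim[simp]: "dim_row (ctrans M) = dim_col M" "dim_col (ctrans M) = dim_row M"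
  unfolding ctrans_def by simp_all

lemma ctrans_index[simp]:
  "i < dim_col M \<Longrightarrow> j < dim_row M \<Longrightarrow> ctrans M $$ (i,j) = cnj (M $$ (j,i))"
  unfolding ctrans_def by simp

lemma ctrans_carrier[simp]: "M \<in> carrier_mat r c \<Longrightarrow> ctrans M \<in> carrier_mat c r"
  unfolding carrier_mat_def by simp

lemma ctrans_ctrans[simp]: "ctrans (ctrans M) = M"
  by (rule eq_matI) simp_all

lemma index_mult_sum:
  "i < dim_row A \<Longrightarrow> j < dim_col B \<Longrightarrow> dim_col A = dim_row B \<Longrightarrow>
   (A * B) $$ (i,j) = (\<Sum>k<dim_row B. A $$ (i,k) * B $$ (k,j))"
  by (auto simp add: index_mult_mat scalar_prod_def row_def col_def atLeast0LessThan intro!: sum.cong)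

lemma ctrans_mult:
  assumes "A \<in> carrier_mat n m" "B \<in> carrier_mat m k"
  shows "ctrans (A * B) = ctrans B * ctrans A"
proof (rule eq_matI)
  fix i j assume "i < dim_row (ctrans B * ctrans A)" and "j < dim_col (ctrans B * ctrans A)"
  then have i: "i < k" and j: "j < n" using assms by auto
  have d: "dim_row A = n" "dim_col A = m" "dim_row B = m" "dim_col B = k" using assms by auto
  have "ctrans (A * B) $$ (i,j) = cnj (\<Sum>l<m. A $$ (j,l) * B $$ (l,i))"
    using d i j by (simp add: index_mult_sum del: index_mult_mat(1))
  also have "\<dots> = (\<Sum>l<m. cnj (B $$ (l,i)) * cnj (A $$ (j,l)))"
    by (simp add: mult.commute)
  also have "\<dots> = (ctrans B * ctrans A) $$ (i,j)"
    using d i j by (simp add: index_mult_sum del: index_mult_mat(1))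
  finally show "ctrans (A * B) $$ (i, j) = (ctrans B * ctrans A) $$ (i, j)" .
qed (use assms in simp_all)

lemma ctrans_four_block:
  assumes "A \<in> carrier_mat n1 m1" "B \<in> carrier_mat n1 m2"
    and "C \<in> carrier_mat n2 m1" "D \<in> carrier_mat n2 m2"
  shows "ctrans (four_block_mat A B C D) = four_block_mat (ctrans A) (ctrans C) (ctrans B) (ctrans D)"
  by (rule eq_matI, insert assms, auto simp: four_block_mat_def)

definition unitary :: "nat \<Rightarrow> complex mat \<Rightarrow> bool" where
  "unitary n U \<longleftrightarrow> U \<in> carrier_mat n n \<and> ctrans U * U = 1\<^sub>m n \<and> U * ctrans U = 1\<^sub>m n"

text \<open>For square matrices a one-sided inverse is two-sided.\<close>
lemma unitaryI:
  assumes "U \<in> carrier_mat n n" "ctrans U * U = 1\<^sub>m n"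
  shows "unitary n U"
  using assms mat_mult_left_right_inverse[of "ctrans U" n U] unfolding unitary_def by simp

lemma unitary_mult:
  assumes W: "unitary n W" and B: "unitary n B"
  shows "unitary n (W * B)"
proof (rule unitaryI)
  have Wc: "W \<in> carrier_mat n n" and Bc: "B \<in> carrier_mat n n"
    and WW: "ctrans W * W = 1\<^sub>m n" and BB: "ctrans B * B = 1\<^sub>m n"
    using W B unfolding unitary_def by auto
  have "ctrans (W * B) * (W * B) = ctrans B * (ctrans W * (W * B))"
    using Wc Bc by (simp add: ctrans_mult assoc_mult_mat[of _ n n _ n _ n])
  also have "ctrans W * (W * B) = B"
    using Wc Bc WW by (simp flip: assoc_mult_mat[of _ n n _ n _ n])
  finally show "ctrans (W * B) * (W * B) = 1\<^sub>m n" using BB by simp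
qed (use W B in \<open>auto simp: unitary_def\<close>)

lemma unitary_block:
  assumes U: "unitary m U"
  shows "unitary (Suc m) (four_block_mat (1\<^sub>m 1) (0\<^sub>m 1 m) (0\<^sub>m m 1) U)"
proof (rule unitaryI)
  have Uc: "U \<in> carrier_mat m m" and UU: "ctrans U * U = 1\<^sub>m m" using U unfolding unitary_def by auto
  show "four_block_mat (1\<^sub>m 1) (0\<^sub>m 1 m) (0\<^sub>m m 1) U \<in> carrier_mat (Suc m) (Suc m)"
    using four_block_carrier_mat[OF one_carrier_mat[of 1] Uc, where B = "0\<^sub>m 1 m" and C = "0\<^sub>m m 1"]
    by simp
  have "ctrans (four_block_mat (1\<^sub>m 1) (0\<^sub>m 1 m) (0\<^sub>m m 1) U) =
        four_block_mat (1\<^sub>m 1) (0\<^sub>m 1 m) (0\<^sub>m m 1) (ctrans U)"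
    using Uc by (simp add: ctrans_four_block[of _ 1 1 _ m _ m]) (auto intro!: eq_matI)
  then show "ctrans (four_block_mat (1\<^sub>m 1) (0\<^sub>m 1 m) (0\<^sub>m m 1) U) *
      four_block_mat (1\<^sub>m 1) (0\<^sub>m 1 m) (0\<^sub>m m 1) U = 1\<^sub>m (Suc m)"
    using Uc UU by (simp add: mult_four_block_mat[of _ 1 1 _ m _ m _ _ 1 _ m])
qed

lemma cscalar_sum:
  "v \<in> carrier_vec n \<Longrightarrow> w \<in> carrier_vec n \<Longrightarrow> v \<bullet>c w = (\<Sum>k<n. v$k * cnj (w$k))"
  by (auto simp add: scalar_prod_def atLeast0LessThan intro!: sum.cong)

lemma self_cscalar: "v \<in> carrier_vec n \<Longrightarrow> v \<bullet>c v = of_real (\<Sum>k<n. (cmod (v$k))^2)"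
proof -
  have "\<And>z::complex. z * cnj z = (of_real (cmod z))^2" by (metis complex_norm_square of_real_power)
  then show "v \<in> carrier_vec n \<Longrightarrow> ?thesis" by (simp add: cscalar_sum)
qed

lemma nonzero_vec_dim: "v \<in> carrier_vec n \<Longrightarrow> v \<noteq> 0\<^sub>v n \<Longrightarrow> n \<noteq> 0"
  by (auto intro!: eq_vecI)

lemma unitary_normalize_columns:
  assumes wsc: "set ws \<subseteq> carrier_vec n" and lws: "length ws = n" and orth: "corthogonal ws"
  shows "\<exists>r. (\<forall>j<n. r j > 0) \<and> unitary n (mat n n (\<lambda>(i,j). ws!j $ i / of_real (r j)))"
proof -
  have wsi: "ws ! i \<in> carrier_vec n" if "i < n" for i using wsc lws that by auto
  define r where "r j = sqrt (\<Sum>k<n. (cmod (ws!j$k))^2)" for j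
  have wsnorm: "ws!j \<bullet>c ws!j = of_real ((r j)^2)" if "j < n" for j
    using self_cscalar[OF wsi[OF that]] unfolding r_def by (simp add: sum_nonneg)
  have rpos: "r j > 0" if "j < n" for j
  proof -
    have "ws!j \<bullet>c ws!j \<noteq> 0" using corthogonalD[OF orth, of j j] that lws by auto
    then have "r j \<noteq> 0" using wsnorm[OF that] by auto
    moreover have "r j \<ge> 0" unfolding r_def by (simp add: sum_nonneg)
    ultimately show ?thesis by simp
  qed
  define W where "W = mat n n (\<lambda>(i,j). ws!j $ i / of_real (r j))"
  have W: "W \<in> carrier_mat n n" unfolding W_def by simp
  have "ctrans W * W = 1\<^sub>m n"
  proof (rule eq_matI)
    fix i j assume "i < dim_row (1\<^sub>m n)" and "j < dim_col (1\<^sub>m n)"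
    then have i: "i < n" and j: "j < n" by auto
    have "(ctrans W * W) $$ (i,j) = (\<Sum>k<n. cnj (ws!i$k / of_real (r i)) * (ws!j$k / of_real (r j)))"
      using i j W by (simp add: index_mult_sum del: index_mult_mat(1)) (simp add: W_def)
    also have "\<dots> = (ws!j \<bullet>c ws!i) / (of_real (r i) * of_real (r j))"
      using cscalar_sum[OF wsi[OF j] wsi[OF i]] by (simp add: sum_divide_distrib mult.commute)
    also have "\<dots> = 1\<^sub>m n $$ (i,j)"
    proof (cases "i = j")
      case True
      then show ?thesis using wsnorm[OF i] rpos[OF i] i by (simp add: power2_eq_square)
    next
      case False
      then have "ws!j \<bullet>c ws!i = 0" using corthogonalD[OF orth, of j i] i j lws by auto
      then show ?thesis using False i j by simp
    qed
    finally show "(ctrans W * W) $$ (i,j) = 1\<^sub>m n $$ (i,j)" .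
  qed (use W in auto)
  then have "unitary n W" using W by (rule unitaryI[rotated])
  then show ?thesis using rpos unfolding W_def by blast
qed

text \<open>Every nonzero vector is, up to a scalar, the first column of a unitary matrix
  (complete it to a basis and orthonormalise by Gram--Schmidt).\<close>
lemma unitary_first_column:
  assumes v: "v \<in> carrier_vec n" and v0: "v \<noteq> 0\<^sub>v n"
  shows "\<exists>W c. unitary n W \<and> c \<noteq> 0 \<and> (\<forall>k<n. W $$ (k,0) = v $ k / c)"
proof -
  have n0: "n \<noteq> 0" using nonzero_vec_dim[OF v v0] .
  interpret cof_vec_space n "TYPE(complex)" .
  define b where "b = basis_completion v"
  define ws where "ws = gram_schmidt n b"
  from basis_completion[OF v v0, folded b_def]
  have dist_b: "distinct b" and indep: "\<not> lin_dep (set b)" and bc: "set b \<subseteq> carrier_vec n"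
    and hdb: "hd b = v" and len_b: "length b = n" by auto
  from hdb len_b n0 obtain vs where bv: "b = v # vs" by (cases b, auto)
  from gram_schmidt_result[OF bc dist_b indep refl, folded ws_def]
  have wsc: "set ws \<subseteq> carrier_vec n" and orth: "corthogonal ws" and lws: "length ws = n"
    by (auto simp: len_b)
  have "hd ws = v" unfolding ws_def bv using gram_schmidt_hd[OF v] .
  then have ws0: "ws ! 0 = v" using lws n0 by (cases ws) auto
  obtain r where rpos: "\<forall>j<n. r j > 0" and W: "unitary n (mat n n (\<lambda>(i,j). ws!j $ i / of_real (r j)))"
    using unitary_normalize_columns[OF wsc lws orth] by blast
  have "\<forall>k<n. mat n n (\<lambda>(i,j). ws!j $ i / of_real (r j)) $$ (k,0) = v $ k / of_real (r 0)"
    using n0 ws0 by simp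
  then show ?thesis using W rpos n0
    by (intro exI[of _ "mat n n (\<lambda>(i,j). ws!j $ i / of_real (r j))"] exI[of _ "of_real (r 0)"]) auto
qed

lemma hermitian_deflation:
  assumes A: "A \<in> carrier_mat n n" and herm: "ctrans A = A" and W: "unitary n W" and n0: "n \<noteq> 0"
    and eig: "\<And>k. k < n \<Longrightarrow> (A * W) $$ (k,0) = e * W $$ (k,0)"
  shows "\<exists>A3 \<in> carrier_mat (n-1) (n-1). ctrans A3 = A3 \<and>
     ctrans W * A * W = four_block_mat (mat 1 1 (\<lambda>_. e)) (0\<^sub>m 1 (n-1)) (0\<^sub>m (n-1) 1) A3"
proof -
  have Wc: "W \<in> carrier_mat n n" and WW: "ctrans W * W = 1\<^sub>m n" using W unfolding unitary_def by auto
  define A' where "A' = ctrans W * A * W"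
  have A': "A' \<in> carrier_mat n n" unfolding A'_def using Wc A by auto
  have col0: "A' $$ (i,0) = (if i = 0 then e else 0)" if i: "i < n" for i
  proof -
    have "A' = ctrans W * (A * W)" unfolding A'_def using Wc A by (simp add: assoc_mult_mat[of _ n n _ n _ n])
    then have "A' $$ (i,0) = (\<Sum>k<n. ctrans W $$ (i,k) * (A * W) $$ (k,0))"
      using i n0 Wc A by (simp add: index_mult_sum del: index_mult_mat(1))
    also have "\<dots> = e * (\<Sum>k<n. ctrans W $$ (i,k) * W $$ (k,0))"
      by (simp add: eig sum_distrib_left mult.left_commute)
    also have "(\<Sum>k<n. ctrans W $$ (i,k) * W $$ (k,0)) = (ctrans W * W) $$ (i,0)"
      using i n0 Wc by (simp add: index_mult_sum del: index_mult_mat(1))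
    finally show ?thesis using WW i n0 by simp
  qed
  have hermA': "ctrans A' = A'"
    unfolding A'_def using Wc A herm by (simp add: ctrans_mult[of _ n n _ n] assoc_mult_mat[of _ n n _ n _ n])
  have "cnj e = e"
    using arg_cong[OF hermA', of "\<lambda>M. M $$ (0,0)"] col0[of 0] n0 A' by simp
  then have row0: "A' $$ (0,j) = (if j = 0 then e else 0)" if j: "j < n" for j
    using arg_cong[OF hermA', of "\<lambda>M. M $$ (0,j)"] col0[OF j] n0 A' j by auto
  define A3 where "A3 = mat (n-1) (n-1) (\<lambda>(i,j). A' $$ (Suc i, Suc j))"
  have A3: "A3 \<in> carrier_mat (n-1) (n-1)" unfolding A3_def by simp
  have "A' = four_block_mat (mat 1 1 (\<lambda>_. e)) (0\<^sub>m 1 (n-1)) (0\<^sub>m (n-1) 1) A3"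
  proof (rule eq_matI)
    fix i j assume "i < dim_row (four_block_mat (mat 1 1 (\<lambda>_. e)) (0\<^sub>m 1 (n-1)) (0\<^sub>m (n-1) 1) A3)"
      "j < dim_col (four_block_mat (mat 1 1 (\<lambda>_. e)) (0\<^sub>m 1 (n-1)) (0\<^sub>m (n-1) 1) A3)"
    then have i: "i < n" and j: "j < n" using A3 n0 by auto
    show "A' $$ (i,j) = four_block_mat (mat 1 1 (\<lambda>_. e)) (0\<^sub>m 1 (n-1)) (0\<^sub>m (n-1) 1) A3 $$ (i,j)"
      using i j A3 n0 col0[OF i] row0[OF j] by (cases "i = 0"; cases "j = 0") (simp_all add: A3_def)
  qed (use A' A3 n0 in auto)
  moreover have "ctrans A3 = A3"
  proof (rule eq_matI)
    fix i j assume "i < dim_row A3" "j < dim_col A3"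
    then have "i < n-1" and "j < n-1" using A3 by auto
    then show "ctrans A3 $$ (i,j) = A3 $$ (i,j)"
      using arg_cong[OF hermA', of "\<lambda>M. M $$ (Suc i, Suc j)"] A3 A' by (simp add: A3_def)
  qed (use A3 in auto)
  ultimately show ?thesis using A3 unfolding A'_def by blast
qed

lemma hermitian_split_eigenvalue:
  assumes A: "A \<in> carrier_mat n n" and herm: "ctrans A = A" and ev: "eigenvalue A e"
  shows "\<exists>W A3. unitary n W \<and> A3 \<in> carrier_mat (n-1) (n-1) \<and> ctrans A3 = A3 \<and>
    ctrans W * A * W = four_block_mat (mat 1 1 (\<lambda>_. e)) (0\<^sub>m 1 (n-1)) (0\<^sub>m (n-1) 1) A3 \<and>
    char_poly A = [:-e, 1:] * char_poly A3"
proof -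
  define v where "v = find_eigenvector A e"
  from find_eigenvector[OF A ev, folded v_def]
  have v: "v \<in> carrier_vec n" and v0: "v \<noteq> 0\<^sub>v n" and Av: "A *\<^sub>v v = e \<cdot>\<^sub>v v"
    unfolding eigenvector_def using A by auto
  obtain W c where W: "unitary n W" and Wcol: "\<And>k. k < n \<Longrightarrow> W $$ (k,0) = v $ k / c"
    using unitary_first_column[OF v v0] by blast
  have Wc: "W \<in> carrier_mat n n" using W unfolding unitary_def by auto
  have eig: "(A * W) $$ (k,0) = e * W $$ (k,0)" if k: "k < n" for k
  proof -
    have "(A * W) $$ (k,0) = (\<Sum>l<n. A $$ (k,l) * v $ l) / c"
      using k Wc A Wcol by (simp add: index_mult_sum sum_divide_distrib del: index_mult_mat(1))
    also have "(\<Sum>l<n. A $$ (k,l) * v $ l) = (A *\<^sub>v v) $ k"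
      using k A v by (auto simp: scalar_prod_def row_def atLeast0LessThan intro!: sum.cong)
    finally show ?thesis using Av k v Wcol by simp
  qed
  obtain A3 where A3: "A3 \<in> carrier_mat (n-1) (n-1)" and herm3: "ctrans A3 = A3"
    and blk: "ctrans W * A * W = four_block_mat (mat 1 1 (\<lambda>_. e)) (0\<^sub>m 1 (n-1)) (0\<^sub>m (n-1) 1) A3"
    using hermitian_deflation[OF A herm W nonzero_vec_dim[OF v v0] eig] by auto
  have "similar_mat_wit (ctrans W * A * W) A (ctrans W) W"
    using A W unfolding similar_mat_wit_def Let_def unitary_def by auto
  then have "char_poly A = char_poly (ctrans W * A * W)"
    by (intro char_poly_similar[symmetric]) (auto simp: similar_mat_def)
  also have "\<dots> = [:-e, 1:] * char_poly A3"
    unfolding blk by (subst char_poly_four_block_zeros_col[OF _ _ A3]) (auto simp: char_poly_defs det_def sign_def)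
  finally show ?thesis using W A3 herm3 blk by blast
qed

lemma hermitian_diagonalization:
  assumes "A \<in> carrier_mat n n" "ctrans A = A" "char_poly A = (\<Prod>e\<leftarrow>es. [:-e,1:])"
  shows "\<exists>U. unitary n U \<and> ctrans U * A * U = mat_diag n (\<lambda>i. es ! i)"
  using assms
proof (induction es arbitrary: n A)
  case Nil
  then have "n = 0" using degree_monic_char_poly[OF Nil(1)] by simp
  then show ?case by (intro exI[of _ "1\<^sub>m 0"]) (auto simp: unitary_def mat_diag_def intro!: eq_matI)
next
  case (Cons e es n A)
  note A = Cons(2) and herm = Cons(3) and cp = Cons(4)
  have "degree (char_poly A) = n" using degree_monic_char_poly[OF A] by simp
  then have n: "n = Suc (length es)"
    using degree_linear_factors[of uminus "e#es"] cp by simp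
  have "eigenvalue A e" unfolding eigenvalue_root_char_poly[OF A] cp by simp
  then obtain W A3 where W: "unitary n W" and A3: "A3 \<in> carrier_mat (n-1) (n-1)"
    and herm3: "ctrans A3 = A3"
    and blk: "ctrans W * A * W = four_block_mat (mat 1 1 (\<lambda>_. e)) (0\<^sub>m 1 (n-1)) (0\<^sub>m (n-1) 1) A3"
    and cpA: "char_poly A = [:-e, 1:] * char_poly A3"
    using hermitian_split_eigenvalue[OF A herm] by blast
  have Wc: "W \<in> carrier_mat n n" using W unfolding unitary_def by auto
  have "[:-e, 1:] * char_poly A3 = [:-e, 1:] * (\<Prod>e\<leftarrow>es. [:-e,1:])"
    using cp cpA by simp
  then have "char_poly A3 = (\<Prod>e\<leftarrow>es. [:-e,1:])"
    by (subst (asm) mult_cancel_left) simp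
  from Cons.IH[OF A3 herm3 this] obtain U3 where U3: "unitary (n-1) U3"
    and U3D: "ctrans U3 * A3 * U3 = mat_diag (n-1) (\<lambda>i. es ! i)" by blast
  have U3c: "U3 \<in> carrier_mat (n-1) (n-1)" using U3 unfolding unitary_def by auto
  define B where "B = four_block_mat (1\<^sub>m 1) (0\<^sub>m 1 (n-1)) (0\<^sub>m (n-1) 1) U3"
  have B: "unitary n B" using unitary_block[OF U3] n unfolding B_def by simp
  have Bc: "B \<in> carrier_mat n n" using B unfolding unitary_def by auto
  have ctransB: "ctrans B = four_block_mat (1\<^sub>m 1) (0\<^sub>m 1 (n-1)) (0\<^sub>m (n-1) 1) (ctrans U3)"
    unfolding B_def using U3c by (simp add: ctrans_four_block[of _ 1 1 _ "n-1" _ "n-1"]) (auto intro!: eq_matI)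
  have "ctrans (W * B) * A * (W * B) = ctrans B * (ctrans W * A * W) * B"
    using Wc Bc A by (simp add: ctrans_mult assoc_mult_mat[of _ n n _ n _ n] mult_carrier_mat[of _ n n])
  also have "\<dots> = four_block_mat (mat 1 1 (\<lambda>_. e)) (0\<^sub>m 1 (n-1)) (0\<^sub>m (n-1) 1) (ctrans U3 * A3 * U3)"
    unfolding ctransB blk unfolding B_def using U3c A3 mult_carrier_mat[OF ctrans_carrier[OF U3c] A3]
    by (simp add: mult_four_block_mat[of _ 1 1 _ "n-1" _ "n-1" _ _ 1 _ "n-1"])
  also have "\<dots> = mat_diag n (\<lambda>i. (e#es) ! i)"
  proof (rule eq_matI)
    fix i j assume "i < dim_row (mat_diag n (\<lambda>i. (e#es) ! i))" and "j < dim_col (mat_diag n (\<lambda>i. (e#es) ! i))"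
    then have i: "i < n" and j: "j < n" by (auto simp: mat_diag_def)
    show "four_block_mat (mat 1 1 (\<lambda>_. e)) (0\<^sub>m 1 (n-1)) (0\<^sub>m (n-1) 1) (ctrans U3 * A3 * U3) $$ (i,j) =
       mat_diag n (\<lambda>i. (e#es) ! i) $$ (i,j)"
      using i j U3c A3 n unfolding U3D
      by (cases "i = 0"; cases "j = 0") (auto simp: mat_diag_def nth_Cons')
  qed (use U3c A3 n in \<open>auto simp: mat_diag_def\<close>)
  finally show ?case using unitary_mult[OF W B] by blast
qed

lemma proots_linear_prod: "proots (\<Prod>e\<leftarrow>es. [:-e, 1:]) = mset (es :: complex list)"
proof (induction es)
  case (Cons e es)
  have "(\<Prod>x\<leftarrow>es. [:-x, 1:]) \<noteq> (0 :: complex poly)"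
    by (auto simp: prod_list_zero_iff)
  then have "proots ([:-e,1:] * (\<Prod>x\<leftarrow>es. [:-x, 1:])) = {#e#} + mset es"
    using Cons proots_linear_factor[of "-e"] by (subst proots_mult) auto
  then show ?case by simp
qed simp

text \<open>For a Hermitian matrix the list eigenvalues_desc has the right length and diagonalises it:
  the roots of the characteristic polynomial are real, so taking real parts loses nothing.\<close>
lemma hermitian_diagonalization_desc:
  assumes R: "R \<in> carrier_mat n n" and herm: "ctrans R = R"
  shows "length (eigenvalues_desc R) = n \<and>
    (\<exists>U. unitary n U \<and> ctrans U * R * U = mat_diag n (\<lambda>i. complex_of_real (eigenvalues_desc R ! i)))"
proof -
  obtain as where cpas: "char_poly R = (\<Prod>a\<leftarrow>as. [:-a,1:])" and las: "length as = n"
    using char_poly_factorized[OF R] by auto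
  from hermitian_diagonalization[OF R herm cpas] obtain U0 where U0: "unitary n U0"
    and D0: "ctrans U0 * R * U0 = mat_diag n (\<lambda>i. as ! i)" by blast
  have U0c: "U0 \<in> carrier_mat n n" using U0 unfolding unitary_def by auto
  have as_real: "complex_of_real (Re x) = x" if xin: "x \<in> set as" for x
  proof -
    obtain i where i: "i < n" and x: "x = as ! i" using xin las by (auto simp: in_set_conv_nth)
    have "ctrans (ctrans U0 * R * U0) = ctrans U0 * R * U0"
      using U0c R herm
      by (simp add: ctrans_mult[of _ n n _ n] assoc_mult_mat[of _ n n _ n _ n] mult_carrier_mat[of _ n n])
    then have "ctrans (ctrans U0 * R * U0) $$ (i,i) = (ctrans U0 * R * U0) $$ (i,i)" by simp
    then have "cnj x = x" using i x unfolding D0 by (simp add: mat_diag_def)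
    then have "Im x = 0" using Reals_cnj_iff complex_is_Real_iff by metis
    then show ?thesis by (simp add: complex_eq_iff)
  qed
  define evs where "evs = eigenvalues_desc R"
  have mev: "mset evs = image_mset Re (mset as)"
    unfolding evs_def eigenvalues_desc_def cpas proots_linear_prod by simp
  then have len: "length evs = n" by (metis las size_image_mset size_mset)
  define es where "es = map complex_of_real evs"
  have "mset es = image_mset (\<lambda>x. complex_of_real (Re x)) (mset as)"
    unfolding es_def mset_map mev by (simp add: multiset.map_comp comp_def)
  also have "\<dots> = image_mset id (mset as)"
    by (rule image_mset_cong) (simp add: as_real)
  finally have mes: "mset es = mset as" by simp
  have "(\<Prod>e\<leftarrow>es. [:-e,1:]) = prod_mset (image_mset (\<lambda>e. [:-e,1:]) (mset es))"
    by (simp flip: prod_mset_prod_list)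
  also have "\<dots> = char_poly R" unfolding mes cpas by (simp flip: prod_mset_prod_list)
  finally have "char_poly R = (\<Prod>e\<leftarrow>es. [:-e,1:])" ..
  from hermitian_diagonalization[OF R herm this] obtain U where
    "unitary n U" "ctrans U * R * U = mat_diag n (\<lambda>i. es ! i)" by blast
  moreover have "mat_diag n (\<lambda>i. es ! i) = mat_diag n (\<lambda>i. complex_of_real (evs ! i))"
    using len by (auto simp: mat_diag_def es_def intro!: eq_matI)
  ultimately show ?thesis using len unfolding evs_def by auto
qed

lemma sum_swap3:
  "(\<Sum>a\<in>A. \<Sum>b\<in>B. \<Sum>c\<in>C. F a b c) = (\<Sum>c\<in>C. \<Sum>b\<in>B. \<Sum>a\<in>A. F a b c)"
  by (subst sum.swap, subst (1 2) sum.swap) (rule refl)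

lemma trace_unitary_conj:
  assumes U: "unitary n U" and R: "R \<in> carrier_mat n n"
  shows "(\<Sum>s<n. (ctrans U * R * U) $$ (s,s)) = (\<Sum>r<n. R $$ (r,r))"
proof -
  have dims: "dim_row U = n" "dim_col U = n" "dim_row R = n" "dim_col R = n"
    and UU: "U * ctrans U = 1\<^sub>m n" using U R unfolding unitary_def by auto
  have "(\<Sum>s<n. (ctrans U * R * U) $$ (s,s)) =
      (\<Sum>s<n. \<Sum>r'<n. \<Sum>r<n. cnj (U $$ (r,s)) * R $$ (r,r') * U $$ (r',s))"
    using dims by (simp add: index_mult_sum sum_distrib_right del: index_mult_mat(1))
  also have "\<dots> = (\<Sum>r<n. \<Sum>r'<n. \<Sum>s<n. cnj (U $$ (r,s)) * R $$ (r,r') * U $$ (r',s))"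
    by (rule sum_swap3)
  also have "\<dots> = (\<Sum>r<n. \<Sum>r'<n. R $$ (r,r') * (U * ctrans U) $$ (r',r))"
    using dims by (simp add: index_mult_sum sum_distrib_left mult_ac del: index_mult_mat(1))
  also have "\<dots> = (\<Sum>r<n. R $$ (r,r))"
    unfolding UU by (simp add: if_distrib cong: if_cong)
  finally show ?thesis .
qed

lemma gram_unitary_conj:
  assumes U: "U \<in> carrier_mat n n" and R: "R \<in> carrier_mat n n"
    and Rdef: "\<And>r r'. r < n \<Longrightarrow> r' < n \<Longrightarrow> R $$ (r,r') = (\<Sum>z\<in>Z. Psi r z * cnj (Psi r' z))"
    and s: "s < n"
  shows "(ctrans U * R * U) $$ (s,s) =
    (\<Sum>z\<in>Z. (\<Sum>r<n. cnj (U $$ (r,s)) * Psi r z) * cnj (\<Sum>r<n. cnj (U $$ (r,s)) * Psi r z))"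
proof -
  have dims: "dim_row U = n" "dim_col U = n" "dim_row R = n" "dim_col R = n" using U R by auto
  have "(ctrans U * R * U) $$ (s,s) = (\<Sum>r'<n. (\<Sum>r<n. cnj (U $$ (r,s)) * R $$ (r,r')) * U $$ (r',s))"
    using dims s by (simp add: index_mult_sum del: index_mult_mat(1))
  also have "\<dots> =
      (\<Sum>r'<n. \<Sum>r<n. \<Sum>z\<in>Z. cnj (U $$ (r,s)) * Psi r z * (U $$ (r',s) * cnj (Psi r' z)))"
    using Rdef by (simp add: sum_distrib_left sum_distrib_right mult_ac)
  also have "\<dots> =
      (\<Sum>z\<in>Z. \<Sum>r<n. \<Sum>r'<n. cnj (U $$ (r,s)) * Psi r z * (U $$ (r',s) * cnj (Psi r' z)))"
    by (rule sum_swap3)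
  also have "\<dots> =
      (\<Sum>z\<in>Z. (\<Sum>r<n. cnj (U $$ (r,s)) * Psi r z) * cnj (\<Sum>r<n. cnj (U $$ (r,s)) * Psi r z))"
    by (simp add: sum_distrib_left sum_distrib_right) (rule sum.cong[OF refl], rule sum.swap)
  finally show ?thesis .
qed

section \<open>Orthogonal projections in a space of functions\<close>

definition inner_on :: "'x set \<Rightarrow> ('x \<Rightarrow> complex) \<Rightarrow> ('x \<Rightarrow> complex) \<Rightarrow> complex" where
  "inner_on X f g = (\<Sum>x\<in>X. cnj (f x) * g x)"

definition sqnorm_on :: "'x set \<Rightarrow> ('x \<Rightarrow> complex) \<Rightarrow> real" where
  "sqnorm_on X f = (\<Sum>x\<in>X. (cmod (f x))^2)"

definition proj_on ::
    "'x set \<Rightarrow> (nat \<Rightarrow> 'x \<Rightarrow> complex) \<Rightarrow> nat \<Rightarrow> ('x \<Rightarrow> complex) \<Rightarrow> 'x \<Rightarrow> complex" where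
  "proj_on X u k f x = (\<Sum>s<k. u s x * inner_on X (u s) f)"

definition orthonormal_on :: "'x set \<Rightarrow> (nat \<Rightarrow> 'x \<Rightarrow> complex) \<Rightarrow> nat \<Rightarrow> bool" where
  "orthonormal_on X u k \<longleftrightarrow>
     (\<forall>s<k. \<forall>t<k. inner_on X (u s) (u t) = (if s = t then 1 else 0))"

lemma cmod_sq_cnj: "(cmod z)^2 = Re (cnj z * z)"
  by (simp only: cmod_power2) (simp add: power2_eq_square)

lemma sqnorm_inner: "sqnorm_on X f = Re (inner_on X f f)"
  unfolding sqnorm_on_def inner_on_def by (simp add: cmod_sq_cnj)

lemma inner_on_cnj: "cnj (inner_on X f g) = inner_on X g f"
  unfolding inner_on_def by (simp add: mult.commute)

lemma inner_on_diff2: "inner_on X f (\<lambda>x. g x - h x) = inner_on X f g - inner_on X f h"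
  unfolding inner_on_def by (simp add: right_diff_distrib sum_subtractf)

lemma inner_on_sum2: "inner_on X f (\<lambda>x. \<Sum>s\<in>S. G s x) = (\<Sum>s\<in>S. inner_on X f (G s))"
  unfolding inner_on_def by (simp add: sum_distrib_left sum.swap[of _ S])

lemma inner_on_sum1: "inner_on X (\<lambda>x. \<Sum>s\<in>S. G s x) h = (\<Sum>s\<in>S. inner_on X (G s) h)"
  unfolding inner_on_def by (simp add: sum_distrib_right sum.swap[of _ S])

lemma inner_on_smult2: "inner_on X f (\<lambda>x. c * g x) = c * inner_on X f g"
  unfolding inner_on_def by (simp add: sum_distrib_left mult.left_commute)

lemma inner_on_smult1: "inner_on X (\<lambda>x. c * g x) h = cnj c * inner_on X g h"
  unfolding inner_on_def by (simp add: sum_distrib_left mult.assoc)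

lemma inner_proj_basis:
  assumes "orthonormal_on X u k" "s < k"
  shows "inner_on X (u s) (proj_on X u k f) = inner_on X (u s) f"
proof -
  have "inner_on X (u s) (proj_on X u k f) = (\<Sum>t<k. inner_on X (u s) (u t) * inner_on X (u t) f)"
    unfolding proj_on_def[abs_def] by (simp add: inner_on_sum2 inner_on_smult2[symmetric] mult.commute)
  also have "\<dots> = (\<Sum>t<k. (if s = t then inner_on X (u t) f else 0))"
    using assms unfolding orthonormal_on_def by (intro sum.cong) auto
  finally show ?thesis using assms(2) by simp
qed

lemma inner_proj_residual:
  assumes "orthonormal_on X u k"
  shows "inner_on X (proj_on X u k g) (\<lambda>x. f x - proj_on X u k f x) = 0"
proof -
  have "inner_on X (proj_on X u k g) (\<lambda>x. f x - proj_on X u k f x) =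
     (\<Sum>s<k. cnj (inner_on X (u s) g) * inner_on X (u s) (\<lambda>x. f x - proj_on X u k f x))"
    unfolding proj_on_def[abs_def] by (simp add: inner_on_sum1 inner_on_smult1[symmetric] mult.commute)
  also have "\<dots> = 0" using inner_proj_basis[OF assms] by (simp add: inner_on_diff2)
  finally show ?thesis .
qed

lemma sqnorm_add:
  "sqnorm_on X (\<lambda>x. a x + b x) = sqnorm_on X a + sqnorm_on X b + 2 * Re (inner_on X a b)"
proof -
  have "\<And>x. (cmod (a x + b x))^2 = (cmod (a x))^2 + (cmod (b x))^2 + 2 * Re (cnj (a x) * b x)"
    by (simp only: cmod_power2) (simp add: power2_eq_square algebra_simps)
  then show ?thesis unfolding sqnorm_on_def inner_on_def by (simp add: sum.distrib sum_distrib_left Re_sum)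
qed

lemma sqnorm_nonneg: "sqnorm_on X f \<ge> 0"
  unfolding sqnorm_on_def by (simp add: sum_nonneg)

lemma proj_on_diff: "proj_on X u k (\<lambda>x. f x - g x) x = proj_on X u k f x - proj_on X u k g x"
  unfolding proj_on_def by (simp add: inner_on_diff2 right_diff_distrib sum_subtractf)

text \<open>Pythagoras for g - proj f, written as the orthogonal sum (g - proj g) + proj (g - f).\<close>
lemma proj_on_pythagoras:
  assumes "orthonormal_on X u k"
  shows "sqnorm_on X (\<lambda>x. g x - proj_on X u k f x) =
         sqnorm_on X (\<lambda>x. g x - proj_on X u k g x) + sqnorm_on X (proj_on X u k (\<lambda>x. g x - f x))"
proof -
  have eq: "(\<lambda>x. g x - proj_on X u k f x) =
      (\<lambda>x. (g x - proj_on X u k g x) + proj_on X u k (\<lambda>x. g x - f x) x)"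
    by (simp add: proj_on_diff)
  have "inner_on X (\<lambda>x. g x - proj_on X u k g x) (proj_on X u k (\<lambda>x. g x - f x)) = 0"
    using inner_proj_residual[OF assms, of "\<lambda>x. g x - f x" g] by (metis inner_on_cnj complex_cnj_zero)
  then show ?thesis unfolding eq sqnorm_add by simp
qed

lemma sqnorm_proj_split:
  assumes "orthonormal_on X u k"
  shows "sqnorm_on X h = sqnorm_on X (\<lambda>x. h x - proj_on X u k h x) + sqnorm_on X (proj_on X u k h)"
  using proj_on_pythagoras[OF assms, of h "\<lambda>x. 0"] by (simp add: proj_on_def inner_on_def)

lemma proj_on_contract:
  assumes "orthonormal_on X u k"
  shows "sqnorm_on X (proj_on X u k h) \<le> sqnorm_on X h"
  using sqnorm_proj_split[OF assms, of h] sqnorm_nonneg[of X "\<lambda>x. h x - proj_on X u k h x"] by simp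

lemma sqnorm_proj_on:
  assumes "orthonormal_on X u k"
  shows "sqnorm_on X (proj_on X u k f) = (\<Sum>s<k. (cmod (inner_on X (u s) f))^2)"
proof -
  have e: "proj_on X u k f = (\<lambda>x. \<Sum>s<k. inner_on X (u s) f * u s x)"
    by (rule ext) (simp add: proj_on_def mult.commute)
  have "inner_on X (proj_on X u k f) (proj_on X u k f) =
      (\<Sum>s<k. cnj (inner_on X (u s) f) * inner_on X (u s) (proj_on X u k f))"
    by (subst (1) e) (simp add: inner_on_sum1 inner_on_smult1)
  also have "\<dots> = (\<Sum>s<k. cnj (inner_on X (u s) f) * inner_on X (u s) f)"
    using inner_proj_basis[OF assms] by simp
  finally show ?thesis unfolding sqnorm_inner by (simp add: cmod_sq_cnj)
qed

lemma sqnorm_residual: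
  assumes "orthonormal_on X u k"
  shows "sqnorm_on X (\<lambda>x. f x - proj_on X u k f x) =
    sqnorm_on X f - (\<Sum>s<k. (cmod (inner_on X (u s) f))^2)"
  using sqnorm_proj_split[OF assms, of f] sqnorm_proj_on[OF assms, of f] by simp

section \<open>Projections acting on the first sites\<close>

type_synonym state = "nat list \<Rightarrow> complex"
type_synonym family = "nat \<Rightarrow> state"

lemma tuples_take: "v \<in> tuples N d \<Longrightarrow> a \<le> N \<Longrightarrow> take a v \<in> tuples a d"
  unfolding tuples_def by (auto dest: in_set_takeD)

lemma tuples_drop: "v \<in> tuples N d \<Longrightarrow> drop a v \<in> tuples (N - a) d"
  unfolding tuples_def by (auto dest: in_set_dropD)

lemma sum_tuples_split: assumes "a \<le> N"
  shows "(\<Sum>v\<in>tuples N d. F v) = (\<Sum>z\<in>tuples (N-a) d. \<Sum>x\<in>tuples a d. F (x @ z))"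
proof -
  have bij: "bij_betw (\<lambda>(x,z). x @ z) (tuples a d \<times> tuples (N-a) d) (tuples N d)"
  proof (rule bij_betw_byWitness[where f' = "\<lambda>v. (take a v, drop a v)"])
    show "\<forall>p\<in>tuples a d \<times> tuples (N - a) d. (\<lambda>v. (take a v, drop a v)) ((\<lambda>(x, z). x @ z) p) = p"
      unfolding tuples_def by auto
    show "\<forall>v\<in>tuples N d. (\<lambda>(x, z). x @ z) (take a v, drop a v) = v" by simp
    show "(\<lambda>(x, z). x @ z) ` (tuples a d \<times> tuples (N - a) d) \<subseteq> tuples N d"
      using assms unfolding tuples_def by auto
    show "(\<lambda>v. (take a v, drop a v)) ` tuples N d \<subseteq> tuples a d \<times> tuples (N - a) d"
      using assms tuples_take tuples_drop by blast
  qed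
  have "(\<Sum>v\<in>tuples N d. F v) = (\<Sum>p\<in>tuples a d \<times> tuples (N-a) d. F ((\<lambda>(x,z). x @ z) p))"
    using sum.reindex_bij_betw[OF bij, of F] by simp
  also have "\<dots> = (\<Sum>x\<in>tuples a d. \<Sum>z\<in>tuples (N-a) d. F (x @ z))"
    by (simp add: sum.cartesian_product split_beta)
  also have "\<dots> = (\<Sum>z\<in>tuples (N-a) d. \<Sum>x\<in>tuples a d. F (x @ z))"
    by (rule sum.swap)
  finally show ?thesis .
qed

lemma sqnorm_diff_eq: "sqnorm_diff N d psi phi = sqnorm_on (tuples N d) (\<lambda>v. psi v - phi v)"
  by (simp add: sqnorm_diff_def sqnorm_on_def)

text \<open>proj_prefix d a u k applies proj_on (tuples a d) u k to the first a sites, i.e. the operator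
  P (x) Id on (C^d)^(tensor a) (x) (C^d)^(tensor (N-a)).\<close>
definition proj_prefix :: "nat \<Rightarrow> nat \<Rightarrow> family \<Rightarrow> nat \<Rightarrow> state \<Rightarrow> state" where
  "proj_prefix d a u k f v = proj_on (tuples a d) u k (\<lambda>x. f (x @ drop a v)) (take a v)"

lemma proj_prefix_append:
  "x \<in> tuples a d \<Longrightarrow> proj_prefix d a u k f (x @ z) = proj_on (tuples a d) u k (\<lambda>x'. f (x' @ z)) x"
  unfolding proj_prefix_def tuples_def by simp

lemma sqnorm_tuples_split: assumes "a \<le> N"
  shows "sqnorm_on (tuples N d) F = (\<Sum>z\<in>tuples (N-a) d. sqnorm_on (tuples a d) (\<lambda>x. F (x @ z)))"
  unfolding sqnorm_on_def using sum_tuples_split[OF assms] .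

lemma proj_prefix_pythagoras: assumes "orthonormal_on (tuples a d) u k" "a \<le> N"
  shows "sqnorm_on (tuples N d) (\<lambda>v. g v - proj_prefix d a u k f v) =
    sqnorm_on (tuples N d) (\<lambda>v. g v - proj_prefix d a u k g v) +
    sqnorm_on (tuples N d) (proj_prefix d a u k (\<lambda>v. g v - f v))"
proof -
  have "sqnorm_on (tuples N d) (\<lambda>v. g v - proj_prefix d a u k f v) =
     (\<Sum>z\<in>tuples (N-a) d. sqnorm_on (tuples a d) (\<lambda>x. g (x @ z) - proj_on (tuples a d) u k (\<lambda>x'. f (x' @ z)) x))"
    unfolding sqnorm_tuples_split[OF assms(2)] by (intro sum.cong refl) (simp add: sqnorm_on_def proj_prefix_append)
  also have "\<dots> = (\<Sum>z\<in>tuples (N-a) d.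
       sqnorm_on (tuples a d) (\<lambda>x. g (x @ z) - proj_on (tuples a d) u k (\<lambda>x'. g (x' @ z)) x) +
       sqnorm_on (tuples a d) (proj_on (tuples a d) u k (\<lambda>x. g (x @ z) - f (x @ z))))"
    by (intro sum.cong refl) (rule proj_on_pythagoras[OF assms(1)])
  also have "\<dots> = sqnorm_on (tuples N d) (\<lambda>v. g v - proj_prefix d a u k g v) +
      sqnorm_on (tuples N d) (proj_prefix d a u k (\<lambda>v. g v - f v))"
    unfolding sqnorm_tuples_split[OF assms(2)] sum.distrib
    by (intro arg_cong2[where f="(+)"] sum.cong refl) (simp_all add: sqnorm_on_def proj_prefix_append)
  finally show ?thesis .
qed

lemma proj_prefix_contract: assumes "orthonormal_on (tuples a d) u k" "a \<le> N"
  shows "sqnorm_on (tuples N d) (proj_prefix d a u k h) \<le> sqnorm_on (tuples N d) h"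
proof -
  have "sqnorm_on (tuples N d) (proj_prefix d a u k h) =
      (\<Sum>z\<in>tuples (N-a) d. sqnorm_on (tuples a d) (proj_on (tuples a d) u k (\<lambda>x. h (x @ z))))"
    unfolding sqnorm_tuples_split[OF assms(2)] by (intro sum.cong refl) (simp add: sqnorm_on_def proj_prefix_append)
  also have "\<dots> \<le> (\<Sum>z\<in>tuples (N-a) d. sqnorm_on (tuples a d) (\<lambda>x. h (x @ z)))"
    by (intro sum_mono proj_on_contract[OF assms(1)])
  also have "\<dots> = sqnorm_on (tuples N d) h" unfolding sqnorm_tuples_split[OF assms(2)] ..
  finally show ?thesis .
qed

lemma proj_prefix_residual:
  assumes "orthonormal_on (tuples a d) u k" "a \<le> N"
  shows "sqnorm_on (tuples N d) (\<lambda>v. f v - proj_prefix d a u k f v) = sqnorm_on (tuples N d) f -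
    (\<Sum>s<k. \<Sum>z\<in>tuples (N-a) d. (cmod (inner_on (tuples a d) (u s) (\<lambda>x. f (x @ z))))^2)"
proof -
  have "sqnorm_on (tuples N d) (\<lambda>v. f v - proj_prefix d a u k f v) =
     (\<Sum>z\<in>tuples (N-a) d. sqnorm_on (tuples a d) (\<lambda>x. f (x @ z) - proj_on (tuples a d) u k (\<lambda>x'. f (x' @ z)) x))"
    unfolding sqnorm_tuples_split[OF assms(2)] by (intro sum.cong refl) (simp add: sqnorm_on_def proj_prefix_append)
  also have "\<dots> = (\<Sum>z\<in>tuples (N-a) d. sqnorm_on (tuples a d) (\<lambda>x. f (x @ z)) -
      (\<Sum>s<k. (cmod (inner_on (tuples a d) (u s) (\<lambda>x. f (x @ z))))^2))"
    by (intro sum.cong refl) (rule sqnorm_residual[OF assms(1)])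
  also have "\<dots> = sqnorm_on (tuples N d) f -
      (\<Sum>s<k. \<Sum>z\<in>tuples (N-a) d. (cmod (inner_on (tuples a d) (u s) (\<lambda>x. f (x @ z))))^2)"
    unfolding sqnorm_tuples_split[OF assms(2)] by (simp add: sum_subtractf sum.swap[of _ "{..<k}"])
  finally show ?thesis .
qed

lemma proj_prefix_chain:
  assumes "\<forall>j\<in>set js. orthonormal_on (tuples j d) (u j) (k j) \<and> j \<le> N"
  shows "sqnorm_on (tuples N d) (\<lambda>v. psi v - foldr (\<lambda>j. proj_prefix d j (u j) (k j)) js psi v)
     \<le> (\<Sum>j\<leftarrow>js. sqnorm_on (tuples N d) (\<lambda>v. psi v - proj_prefix d j (u j) (k j) psi v))"
  using assms
proof (induction js)
  case Nil
  then show ?case by (simp add: sqnorm_on_def)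
next
  case (Cons j js)
  let ?phi = "foldr (\<lambda>j. proj_prefix d j (u j) (k j)) js psi"
  have o: "orthonormal_on (tuples j d) (u j) (k j)" and jN: "j \<le> N" using Cons.prems by auto
  have "sqnorm_on (tuples N d) (\<lambda>v. psi v - proj_prefix d j (u j) (k j) ?phi v) =
     sqnorm_on (tuples N d) (\<lambda>v. psi v - proj_prefix d j (u j) (k j) psi v) +
     sqnorm_on (tuples N d) (proj_prefix d j (u j) (k j) (\<lambda>v. psi v - ?phi v))"
    by (rule proj_prefix_pythagoras[OF o jN])
  also have "sqnorm_on (tuples N d) (proj_prefix d j (u j) (k j) (\<lambda>v. psi v - ?phi v)) \<le>
      sqnorm_on (tuples N d) (\<lambda>v. psi v - ?phi v)"
    by (rule proj_prefix_contract[OF o jN])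
  finally show ?case using Cons by simp
qed

section \<open>Composed prefix projections are matrix product states\<close>

definition mps_tensor :: "nat \<Rightarrow> (nat \<Rightarrow> family) \<Rightarrow> (nat \<Rightarrow> nat) \<Rightarrow> nat \<Rightarrow> nat \<Rightarrow> complex mat" where
  "mps_tensor d u k j i =
     mat (k j) (k (Suc j)) (\<lambda>(s,t). inner_on (tuples j d) (u j s) (\<lambda>x. u (Suc j) t (x @ [i])))"

text \<open>mps_row d u k m t y is the entry t of the row vector A^[1] y_1 ... A^[m] y_m.\<close>
fun mps_row :: "nat \<Rightarrow> (nat \<Rightarrow> family) \<Rightarrow> (nat \<Rightarrow> nat) \<Rightarrow> nat \<Rightarrow> nat \<Rightarrow> nat list \<Rightarrow> complex" where
  "mps_row d u k 0 t y = 1"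
| "mps_row d u k (Suc m) t y = (\<Sum>s<k m.
     mps_row d u k m s (butlast y) * inner_on (tuples m d) (u m s) (\<lambda>x. u (Suc m) t (x @ [last y])))"

lemma mps_tensor_product:
  assumes "k 0 = 1" "v \<in> tuples N d" "m \<le> N"
  shows "foldl (\<lambda>M j. M * mps_tensor d u k j (v ! j)) (1\<^sub>m 1) [0..<m] =
    mat 1 (k m) (\<lambda>(_,t). mps_row d u k m t (take m v))"
  using assms(3)
proof (induction m)
  case 0
  then show ?case using assms(1) by (intro eq_matI) auto
next
  case (Suc m)
  have lv: "length v = N" using assms(2) unfolding tuples_def by simp
  have "foldl (\<lambda>M j. M * mps_tensor d u k j (v ! j)) (1\<^sub>m 1) [0..<Suc m] =
      mat 1 (k m) (\<lambda>(_,t). mps_row d u k m t (take m v)) * mps_tensor d u k m (v ! m)"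
    using Suc by simp
  also have "\<dots> = mat 1 (k (Suc m)) (\<lambda>(_,t). mps_row d u k (Suc m) t (take (Suc m) v))"
  proof (rule eq_matI)
    fix i j assume i: "i < dim_row (mat 1 (k (Suc m)) (\<lambda>(_,t). mps_row d u k (Suc m) t (take (Suc m) v)))"
      and j: "j < dim_col (mat 1 (k (Suc m)) (\<lambda>(_,t). mps_row d u k (Suc m) t (take (Suc m) v)))"
    have bl: "butlast (take (Suc m) v) = take m v" using lv Suc.prems by (simp add: butlast_take)
    have la: "last (take (Suc m) v) = v ! m" using lv Suc.prems by (simp add: take_Suc_conv_app_nth)
    show "(mat 1 (k m) (\<lambda>(_,t). mps_row d u k m t (take m v)) * mps_tensor d u k m (v ! m)) $$ (i,j) =
          mat 1 (k (Suc m)) (\<lambda>(_,t). mps_row d u k (Suc m) t (take (Suc m) v)) $$ (i,j)"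
      using i j bl la by (simp add: index_mult_sum mps_tensor_def del: index_mult_mat(1))
  qed (simp_all add: mps_tensor_def)
  finally show ?case .
qed

text \<open>mps_expand d u k m f v: the first m tensors contracted with the coefficients of f in the
  family u m.  It interpolates between f itself (m = 0) and the MPS coefficient (m = N).\<close>
definition mps_expand :: "nat \<Rightarrow> (nat \<Rightarrow> family) \<Rightarrow> (nat \<Rightarrow> nat) \<Rightarrow> nat \<Rightarrow> state \<Rightarrow> state" where
  "mps_expand d u k m f v =
     (\<Sum>t<k m. mps_row d u k m t (take m v) * inner_on (tuples m d) (u m t) (\<lambda>x. f (x @ drop m v)))"

lemma tuples_0: "tuples 0 d = {[]}"
  unfolding tuples_def by auto

lemma mps_expand_0: assumes "k 0 = 1" "u 0 0 [] = 1"
  shows "mps_expand d u k 0 f v = f v"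
  unfolding mps_expand_def using assms by (simp add: tuples_0 inner_on_def)

text \<open>One more tensor absorbs one more prefix projection: the coefficients of P_(m+1) f in the
  family u m are those of f in u (m+1), transported by the tensor A^[m+1].\<close>
lemma mps_expand_Suc:
  assumes v: "v \<in> tuples N d" and m: "Suc m \<le> N"
  shows "mps_expand d u k (Suc m) f v = mps_expand d u k m (proj_prefix d (Suc m) (u (Suc m)) (k (Suc m)) f) v"
proof -
  have lv: "length v = N" using v unfolding tuples_def by simp
  let ?i = "v ! m"
  define c where "c t = inner_on (tuples (Suc m) d) (u (Suc m) t) (\<lambda>x. f (x @ drop (Suc m) v))" for t
  define A where "A s t = inner_on (tuples m d) (u m s) (\<lambda>x. u (Suc m) t (x @ [?i]))" for s t
  have P: "proj_prefix d (Suc m) (u (Suc m)) (k (Suc m)) f (x @ drop m v) =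
      (\<Sum>t<k (Suc m). u (Suc m) t (x @ [?i]) * c t)" if x: "x \<in> tuples m d" for x
  proof -
    have lx: "length x = m" using x unfolding tuples_def by simp
    have dm: "drop m v = ?i # drop (Suc m) v" using lv m by (simp add: Cons_nth_drop_Suc)
    have "take (Suc m) (x @ drop m v) = x @ [?i]" using lx dm by simp
    moreover have "drop (Suc m) (x @ drop m v) = drop (Suc m) v" using lx dm by simp
    ultimately show ?thesis unfolding proj_prefix_def proj_on_def c_def by simp
  qed
  have "mps_expand d u k m (proj_prefix d (Suc m) (u (Suc m)) (k (Suc m)) f) v =
     (\<Sum>s<k m. mps_row d u k m s (take m v) *
        inner_on (tuples m d) (u m s) (\<lambda>x. \<Sum>t<k (Suc m). u (Suc m) t (x @ [?i]) * c t))"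
    unfolding mps_expand_def by (intro sum.cong refl arg_cong2[where f="(*)"]) (simp add: inner_on_def P)
  also have "\<dots> = (\<Sum>s<k m. \<Sum>t<k (Suc m). mps_row d u k m s (take m v) * (A s t * c t))"
    by (simp add: A_def inner_on_sum2 sum_distrib_left mult.commute inner_on_smult2[symmetric])
  also have "\<dots> = (\<Sum>t<k (Suc m). (\<Sum>s<k m. mps_row d u k m s (take m v) * A s t) * c t)"
    by (simp add: sum.swap[of _ "{..<k m}"] sum_distrib_right mult.assoc)
  also have "\<dots> = mps_expand d u k (Suc m) f v"
  proof -
    have "butlast (take (Suc m) v) = take m v" using lv m by (simp add: butlast_take)
    moreover have "last (take (Suc m) v) = ?i" using lv m by (simp add: take_Suc_conv_app_nth)
    ultimately show ?thesis unfolding mps_expand_def c_def A_def by simp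
  qed
  finally show ?thesis by simp
qed

lemma mps_expand_foldr: assumes "k 0 = 1" "u 0 0 [] = 1" "v \<in> tuples N d" "m \<le> N"
  shows "mps_expand d u k m f v = foldr (\<lambda>j. proj_prefix d j (u j) (k j)) [1..<Suc m] f v"
  using assms(4)
proof (induction m arbitrary: f)
  case 0
  then show ?case using mps_expand_0[where k=k and u=u, OF assms(1,2)] by simp
next
  case (Suc m)
  have "mps_expand d u k (Suc m) f v = mps_expand d u k m (proj_prefix d (Suc m) (u (Suc m)) (k (Suc m)) f) v"
    using mps_expand_Suc[OF assms(3) Suc.prems] .
  also have "\<dots> =
      foldr (\<lambda>j. proj_prefix d j (u j) (k j)) [1..<Suc m] (proj_prefix d (Suc m) (u (Suc m)) (k (Suc m)) f) v"
    using Suc by simp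
  also have "\<dots> = foldr (\<lambda>j. proj_prefix d j (u j) (k j)) [1..<Suc (Suc m)] f v"
    by simp
  finally show ?case .
qed

text \<open>Fact (3): padding the families with the trivial family at site 0 and with psi itself at
  site N, the state P_1 (... (P_(N-1) psi)) is an MPS whose bond dimensions are the k j.\<close>
lemma prefix_projections_mps:
  fixes psi :: "nat list \<Rightarrow> complex"
  assumes N: "N \<ge> 1" and D: "D \<ge> 1" and kD: "\<And>j. 0 < j \<Longrightarrow> j < N \<Longrightarrow> k j \<le> D"
  shows "is_mps N d D (foldr (\<lambda>j. proj_prefix d j (u j) (k j)) [1..<N] psi)"
proof -
  define kk where "kk j = (if j = 0 \<or> j = N then 1 else k j)" for j
  define uu where "uu j = (if j = 0 then (\<lambda>s x. 1) else if j = N then (\<lambda>s x. psi x) else u j)" for j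
  have padded: "foldr (\<lambda>j. proj_prefix d j (u j) (k j)) [1..<N] psi =
      foldr (\<lambda>j. proj_prefix d j (uu j) (kk j)) [1..<N] psi"
    by (intro foldr_cong) (auto simp: uu_def kk_def)
  have k0: "kk 0 = 1" and u0: "uu 0 0 [] = 1" by (simp_all add: kk_def uu_def)
  have coeff: "mps_coeff N (mps_tensor d uu kk) v = foldr (\<lambda>j. proj_prefix d j (uu j) (kk j)) [1..<N] psi v"
    if v: "v \<in> tuples N d" for v
  proof -
    have lv: "length v = N" using v by (simp add: tuples_def)
    have NS: "N = Suc (N - 1)" using N by simp
    have "drop (N-1) v = [v ! (N-1)]" using lv N by (intro nth_equalityI) auto
    moreover have "last v = v ! (N-1)" using lv N last_conv_nth[of v] by (cases "v = []") auto
    moreover have "butlast v = take (N-1) v" by (simp add: butlast_conv_take lv)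
    ultimately have "mps_row d uu kk (Suc (N-1)) 0 v = mps_expand d uu kk (N - 1) psi v"
      unfolding mps_row.simps mps_expand_def using NS by (simp add: uu_def)
    then have "mps_coeff N (mps_tensor d uu kk) v = mps_expand d uu kk (N - 1) psi v"
      unfolding mps_coeff_def mps_tensor_product[where u=uu and k=kk and m=N, OF k0 v le_refl]
      using lv NS by (simp add: kk_def)
    also have "\<dots> = foldr (\<lambda>j. proj_prefix d j (uu j) (kk j)) [1..<N] psi v"
      using mps_expand_foldr[where u=uu and k=kk and m="N-1", OF k0 u0 v] NS by simp
    finally show ?thesis .
  qed
  show ?thesis unfolding is_mps_def padded
  proof (intro exI conjI)
    show "kk 0 = 1" "kk N = 1" by (simp_all add: kk_def)
    show "\<forall>j\<le>N. kk j \<le> D" using D kD by (auto simp: kk_def)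
    show "\<forall>j<N. \<forall>i<d. mps_tensor d uu kk j i \<in> carrier_mat (kk j) (kk (Suc j))"
      by (simp add: mps_tensor_def)
    show "\<forall>v\<in>tuples N d. foldr (\<lambda>j. proj_prefix d j (uu j) (kk j)) [1..<N] psi v =
        mps_coeff N (mps_tensor d uu kk) v"
      using coeff by simp
  qed
qed

section \<open>The spectral projection and the discarded weight\<close>

text \<open>Inverse of the base-d digit expansion: digits d a is a bijection from {..<d^a} onto the
  a-tuples, identifying C^(d^a) (the rows of the reduced density matrix) with functions on tuples.\<close>
definition of_digits :: "nat \<Rightarrow> nat list \<Rightarrow> nat" where
  "of_digits d xs = foldl (\<lambda>r x. r * d + x) 0 xs"

lemma of_digits_snoc: "of_digits d (xs @ [x]) = of_digits d xs * d + x"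
  unfolding of_digits_def by simp

lemma digits_len: "length (digits d k r) = k"
  by (induction k arbitrary: r) auto

lemma digits_tuples: "d > 0 \<Longrightarrow> digits d k r \<in> tuples k d"
  unfolding tuples_def
proof (induction k arbitrary: r)
  case 0 then show ?case by simp
next
  case (Suc k) then show ?case by (auto simp: digits_len)
qed

lemma of_digits_digits: "d > 0 \<Longrightarrow> r < d^k \<Longrightarrow> of_digits d (digits d k r) = r"
proof (induction k arbitrary: r)
  case 0 then show ?case by (simp add: of_digits_def)
next
  case (Suc k)
  have "r div d < d^k" using Suc.prems by (simp add: div_less_iff_less_mult mult.commute)
  then show ?case using Suc by (simp add: of_digits_snoc)
qed

lemma tuples_Suc_snoc:
  "x \<in> tuples (Suc k) d \<Longrightarrow> \<exists>xs y. x = xs @ [y] \<and> xs \<in> tuples k d \<and> y < d"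
  unfolding tuples_def by (cases x rule: rev_cases) auto

lemma digits_of_digits:
  "d > 0 \<Longrightarrow> x \<in> tuples k d \<Longrightarrow> digits d k (of_digits d x) = x \<and> of_digits d x < d^k"
proof (induction k arbitrary: x)
  case 0 then show ?case by (simp add: tuples_def of_digits_def)
next
  case (Suc k)
  obtain xs y where x: "x = xs @ [y]" and xs: "xs \<in> tuples k d" and y: "y < d"
    using tuples_Suc_snoc[OF Suc.prems(2)] by blast
  have IH: "digits d k (of_digits d xs) = xs" "of_digits d xs < d^k" using Suc.IH[OF Suc.prems(1) xs] by auto
  have "of_digits d xs * d + y < (of_digits d xs + 1) * d" using y by simp
  also have "\<dots> \<le> d^k * d" using IH(2) by (intro mult_right_mono) auto
  finally have lt: "of_digits d x < d^Suc k" unfolding x of_digits_snoc by (simp add: mult.commute)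
  have "digits d (Suc k) (of_digits d x) = xs @ [y]"
    unfolding x of_digits_snoc using y IH(1) by simp
  then show ?case using lt x by simp
qed

lemma bij_digits: "d > 0 \<Longrightarrow> bij_betw (digits d k) {..<d^k} (tuples k d)"
  by (rule bij_betw_byWitness[where f'="of_digits d"]) (auto simp: of_digits_digits digits_of_digits digits_tuples)

lemma sum_tuples_digits: "d > 0 \<Longrightarrow> (\<Sum>x\<in>tuples k d. F x) = (\<Sum>r<d^k. F (digits d k r))"
  using sum.reindex_bij_betw[OF bij_digits, of d F k] by simp

lemma reduced_density_carrier: "reduced_density N d a psi \<in> carrier_mat (d^a) (d^a)"
  by (simp add: reduced_density_def)

lemma reduced_density_hermitian: "ctrans (reduced_density N d a psi) = reduced_density N d a psi"
  by (rule eq_matI) (simp_all add: reduced_density_def mult.commute)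

lemma trace_reduced_density:
  assumes d: "d > 0" and aN: "a \<le> N"
  shows "(\<Sum>r<d^a. reduced_density N d a psi $$ (r,r)) = of_real (sqnorm_on (tuples N d) psi)"
proof -
  have "(\<Sum>r<d^a. reduced_density N d a psi $$ (r,r)) =
      (\<Sum>r<d^a. \<Sum>z\<in>tuples (N-a) d. of_real ((cmod (psi (digits d a r @ z)))^2))"
    by (intro sum.cong refl) (simp add: reduced_density_def complex_norm_square del: of_real_power)
  also have "\<dots> = of_real (sqnorm_on (tuples N d) psi)"
    unfolding sqnorm_tuples_split[OF aN] unfolding sqnorm_on_def sum_tuples_digits[OF d] of_real_sum
    by (rule sum.swap)
  finally show ?thesis .
qed

lemma reduced_density_diagonalization:
  "length (eigenvalues_desc (reduced_density N d a psi)) = d^a \<and>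
   (\<exists>U. unitary (d^a) U \<and> ctrans U * reduced_density N d a psi * U =
      mat_diag (d^a) (\<lambda>i. complex_of_real (eigenvalues_desc (reduced_density N d a psi) ! i)))"
  by (rule hermitian_diagonalization_desc[OF reduced_density_carrier reduced_density_hermitian])

text \<open>The eigenvalues of rho_[1..a] sum to its trace, the squared norm of psi.\<close>
lemma sum_eigenvalues_reduced_density:
  assumes d: "d > 0" and aN: "a \<le> N"
  shows "sum_list (eigenvalues_desc (reduced_density N d a psi)) = sqnorm_on (tuples N d) psi"
proof -
  define n where "n = d^a"
  define R where "R = reduced_density N d a psi"
  define evs where "evs = eigenvalues_desc R"
  obtain U where U: "unitary n U" and len: "length evs = n"
    and UD: "ctrans U * R * U = mat_diag n (\<lambda>i. complex_of_real (evs ! i))"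
    using reduced_density_diagonalization unfolding evs_def R_def n_def by blast
  have "sqnorm_on (tuples N d) psi = Re (\<Sum>r<n. R $$ (r,r))"
    using trace_reduced_density[OF d aN] unfolding R_def n_def by simp
  also have "\<dots> = Re (\<Sum>s<n. (ctrans U * R * U) $$ (s,s))"
    using trace_unitary_conj[OF U] reduced_density_carrier unfolding R_def n_def by simp
  also have "\<dots> = sum_list evs"
    unfolding UD using len by (simp add: Re_sum mat_diag_def sum_list_sum_nth atLeast0LessThan)
  finally show ?thesis unfolding evs_def R_def ..
qed

text \<open>The columns of a unitary diagonalising rho_[1..a], read as functions on a-tuples, form an
  orthonormal eigenbasis, and the weight of psi on the s-th of them is the s-th eigenvalue.\<close>
lemma reduced_density_eigenbasis:
  fixes psi :: state
  assumes d: "d > 0"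
  shows "\<exists>u. orthonormal_on (tuples a d) u (d^a) \<and>
    (\<forall>s<d^a. (\<Sum>z\<in>tuples (N-a) d. (cmod (inner_on (tuples a d) (u s) (\<lambda>x. psi (x @ z))))^2) =
       eigenvalues_desc (reduced_density N d a psi) ! s)"
proof -
  define n where "n = d^a"
  define R where "R = reduced_density N d a psi"
  define evs where "evs = eigenvalues_desc R"
  have R: "R \<in> carrier_mat n n" unfolding R_def n_def by (rule reduced_density_carrier)
  obtain U where U: "unitary n U" and UD: "ctrans U * R * U = mat_diag n (\<lambda>i. complex_of_real (evs ! i))"
    using reduced_density_diagonalization unfolding evs_def R_def n_def by blast
  have Uc: "U \<in> carrier_mat n n" using U unfolding unitary_def by auto
  define u where "u s x = U $$ (of_digits d x, s)" for s x
  have inner_u: "inner_on (tuples a d) (u s) f = (\<Sum>r<n. cnj (U $$ (r,s)) * f (digits d a r))" for s f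
    unfolding inner_on_def u_def n_def sum_tuples_digits[OF d] using d
    by (intro sum.cong) (auto simp: of_digits_digits)
  have "orthonormal_on (tuples a d) u n"
    unfolding orthonormal_on_def
  proof (intro allI impI)
    fix s t assume s: "s < n" and t: "t < n"
    have "inner_on (tuples a d) (u s) (u t) = (\<Sum>r<n. cnj (U $$ (r,s)) * U $$ (r,t))"
      unfolding inner_u unfolding u_def n_def using d by (intro sum.cong) (auto simp: of_digits_digits)
    also have "\<dots> = (ctrans U * U) $$ (s,t)"
      using s t Uc by (simp add: index_mult_sum del: index_mult_mat(1))
    finally show "inner_on (tuples a d) (u s) (u t) = (if s = t then 1 else 0)"
      using U s t unfolding unitary_def by simp
  qed
  moreover have "(\<Sum>z\<in>tuples (N-a) d. (cmod (inner_on (tuples a d) (u s) (\<lambda>x. psi (x @ z))))^2) = evs ! s"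
    if s: "s < n" for s
  proof -
    define c where "c z = inner_on (tuples a d) (u s) (\<lambda>x. psi (x @ z))" for z
    have Rent: "R $$ (r,r') = (\<Sum>z\<in>tuples (N-a) d. psi (digits d a r @ z) * cnj (psi (digits d a r' @ z)))"
      if "r < n" "r' < n" for r r'
      using that by (simp add: R_def reduced_density_def n_def)
    have "complex_of_real (evs ! s) = (ctrans U * R * U) $$ (s,s)"
      unfolding UD using s by (simp add: mat_diag_def)
    also have "\<dots> = (\<Sum>z\<in>tuples (N-a) d. c z * cnj (c z))"
      using gram_unitary_conj[OF Uc R Rent s] by (simp add: inner_u c_def)
    also have "\<dots> = of_real (\<Sum>z\<in>tuples (N-a) d. (cmod (c z))^2)"
      by (simp add: complex_norm_square of_real_sum del: of_real_power)
    finally show ?thesis unfolding of_real_eq_iff c_def by (rule sym)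
  qed
  ultimately show ?thesis unfolding n_def evs_def R_def by blast
qed

lemma sum_list_drop:
  "sum_list (drop D xs) = sum_list xs - (\<Sum>i<min (length xs) D. xs ! i)" for xs :: "real list"
proof -
  have "sum_list xs = sum_list (take D xs) + sum_list (drop D xs)"
    by (metis append_take_drop_id sum_list_append)
  then show ?thesis by (simp add: sum_list_sum_nth atLeast0LessThan)
qed

lemma spectral_projection_error:
  fixes psi :: state
  assumes d: "d > 0" and aN: "a \<le> N"
  shows "\<exists>u. orthonormal_on (tuples a d) u (min D (d^a)) \<and>
     sqnorm_on (tuples N d) (\<lambda>v. psi v - proj_prefix d a u (min D (d^a)) psi v) = trunc_err N d psi a D"
proof -
  define k where "k = min D (d^a)"
  define evs where "evs = eigenvalues_desc (reduced_density N d a psi)"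
  obtain u where orth: "orthonormal_on (tuples a d) u (d^a)"
    and weight: "\<And>s. s < d^a \<Longrightarrow>
      (\<Sum>z\<in>tuples (N-a) d. (cmod (inner_on (tuples a d) (u s) (\<lambda>x. psi (x @ z))))^2) = evs ! s"
    using reduced_density_eigenbasis[OF d] unfolding evs_def by blast
  have orth_k: "orthonormal_on (tuples a d) u k" using orth unfolding orthonormal_on_def k_def by simp
  have "sqnorm_on (tuples N d) (\<lambda>v. psi v - proj_prefix d a u k psi v) = sum_list evs - (\<Sum>s<k. evs ! s)"
    unfolding proj_prefix_residual[OF orth_k aN] evs_def sum_eigenvalues_reduced_density[OF d aN]
    using weight by (simp add: k_def evs_def)
  also have "\<dots> = trunc_err N d psi a D"
    unfolding trunc_err_def sum_list_drop evs_def[symmetric] k_def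
    using reduced_density_diagonalization by (simp add: evs_def min.commute)
  finally show ?thesis using orth_k unfolding k_def by auto
qed

theorem lemma1:
  fixes d N D :: nat and psi :: "nat list \<Rightarrow> complex"
  assumes "d \<ge> 2" and "N \<ge> 2" and "normalized N d psi" and "D \<ge> 1"
  shows "\<exists>phi. is_mps N d D phi \<and>
           sqnorm_diff N d psi phi \<le> 2 * (\<Sum>a = 1..N - 1. trunc_err N d psi a D)"
proof -
  have d: "d > 0" using assms(1) by simp
  have "\<forall>a. \<exists>u. a \<le> N \<longrightarrow> orthonormal_on (tuples a d) u (min D (d^a)) \<and>
     sqnorm_on (tuples N d) (\<lambda>v. psi v - proj_prefix d a u (min D (d^a)) psi v) = trunc_err N d psi a D"
    using spectral_projection_error[OF d] by blast
  then obtain u where u: "\<And>a. a \<le> N \<Longrightarrow> orthonormal_on (tuples a d) (u a) (min D (d^a)) \<and>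
     sqnorm_on (tuples N d) (\<lambda>v. psi v - proj_prefix d a (u a) (min D (d^a)) psi v) = trunc_err N d psi a D"
    by metis
  define phi where "phi = foldr (\<lambda>a. proj_prefix d a (u a) (min D (d^a))) [1..<N] psi"
  have "is_mps N d D phi"
    unfolding phi_def using assms(2,4) by (intro prefix_projections_mps) auto
  moreover have "sqnorm_diff N d psi phi \<le> (\<Sum>a\<leftarrow>[1..<N]. trunc_err N d psi a D)"
  proof -
    have "sqnorm_diff N d psi phi \<le>
        (\<Sum>a\<leftarrow>[1..<N]. sqnorm_on (tuples N d) (\<lambda>v. psi v - proj_prefix d a (u a) (min D (d^a)) psi v))"
      unfolding sqnorm_diff_eq phi_def using u by (intro proj_prefix_chain) auto
    also have "\<dots> = (\<Sum>a\<leftarrow>[1..<N]. trunc_err N d psi a D)"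
      using u by (intro arg_cong[of _ _ sum_list] map_cong) auto
    finally show ?thesis .
  qed
  moreover have "(\<Sum>a\<leftarrow>[1..<N]. trunc_err N d psi a D) = (\<Sum>a = 1..N - 1. trunc_err N d psi a D)"
  proof -
    have "{1..<N} = {1..N - 1}" using assms(2) by auto
    then show ?thesis by (simp add: sum_list_distinct_conv_sum_set)
  qed
  moreover have "(\<Sum>a = 1..N - 1. trunc_err N d psi a D) \<ge> 0"
  proof (rule sum_nonneg)
    fix a assume "a \<in> {1..N - 1}"
    then have "a \<le> N" by auto
    then show "trunc_err N d psi a D \<ge> 0" using u sqnorm_nonneg by metis
  qed
  ultimately show ?thesis by (intro exI[of _ phi]) auto
qed

end
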